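(* Let $H<G$ be groups with $H$ $\sigma$-co-sofic in $G$. Then $H<G$ is relatively sofic over $G$.
   Context: $H$ is co-sofic in $G$ if there exist two decreasing sequences $(G_i)$ and $(H_i)$ of subgroups of $G$ such that $\bigcap_i G_i=H$, $H_i<G_i$, $H_i\triangleleft G$, $G/H_i$ is sofic, and $G_i/H_i$ is amenable for all $i$. $H$ is $\sigma$-co-sofic in $G$ if there exist two increasing sequences $(G_i)$ and $(H_i)$ of subgroups of $G$ such that $\bigcup_i G_i=G$, $\bigcup_i H_i=H$, $H_i<G_i$, and $H_i$ is co-sofic in $G_i$ for all $i$. $H<G$ is relatively sofic over a group $K$ if there exist a sequence of inclusions of groups $(H'_i<G'_i)_{i\in\mathbb N}$ with all $G'_i$ sofic and all $H'_i$ amenable, a free ultrafilter $\omega$ on $\mathbb N$, and an embedding $\pi:G\to\prod_\omega(G'_i\times K)$ into the algebraic ultraproduct such that $\pi(G)\cap\prod_\omega(H'_i\times K)=\pi(H)$. The algebraic ultraproduct is $\prod_\omega L_i=(\prod_i L_i)/N$ with $N=\{(g_i):\{i:g_i=1\}\in\omega\}$. *)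

theory Defs
  imports "HOL-Algebra.Algebra" "HOL-Combinatorics.Permutations"
begin

definition free_ultrafilter :: "nat filter \<Rightarrow> bool" where
  "free_ultrafilter \<omega> \<longleftrightarrow> \<omega> \<noteq> bot \<and> (\<forall>P. eventually P \<omega> \<or> eventually (\<lambda>x. \<not> P x) \<omega>)
      \<and> \<omega> \<le> cofinite"

definition hamming :: "nat \<Rightarrow> (nat \<Rightarrow> nat) \<Rightarrow> (nat \<Rightarrow> nat) \<Rightarrow> real" where
  "hamming n s t = real (card {k\<in>{..<n}. s k \<noteq> t k}) / real n"

definition sofic :: "('a, 'b) monoid_scheme \<Rightarrow> bool" where
  "sofic G \<longleftrightarrow> group G \<and>
    (\<forall>F \<epsilon>. finite F \<and> F \<subseteq> carrier G \<and> \<epsilon> > (0::real) \<longrightarrow>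
      (\<exists>n::nat. n > 0 \<and> (\<exists>\<phi>. (\<forall>g\<in>carrier G. \<phi> g permutes {..<n}) \<and> \<phi> \<one>\<^bsub>G\<^esub> = id \<and>
         (\<forall>g\<in>F. \<forall>h\<in>F. hamming n (\<phi> (g \<otimes>\<^bsub>G\<^esub> h)) (\<phi> g \<circ> \<phi> h) < \<epsilon>) \<and>
         (\<forall>g\<in>F. g \<noteq> \<one>\<^bsub>G\<^esub> \<longrightarrow> hamming n (\<phi> g) id > 1 - \<epsilon>))))"

definition amenable :: "('a, 'b) monoid_scheme \<Rightarrow> bool" where
  "amenable G \<longleftrightarrow> group G \<and>
    (\<exists>\<mu> :: 'a set \<Rightarrow> real.
       \<mu> (carrier G) = 1 \<and>
       (\<forall>A. A \<subseteq> carrier G \<longrightarrow> \<mu> A \<ge> 0) \<and>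
       (\<forall>A B. A \<subseteq> carrier G \<and> B \<subseteq> carrier G \<and> A \<inter> B = {} \<longrightarrow> \<mu> (A \<union> B) = \<mu> A + \<mu> B) \<and>
       (\<forall>g A. g \<in> carrier G \<and> A \<subseteq> carrier G \<longrightarrow> \<mu> (g <#\<^bsub>G\<^esub> A) = \<mu> A))"

definition co_sofic :: "('a, 'b) monoid_scheme \<Rightarrow> 'a set \<Rightarrow> bool" where
  "co_sofic G H \<longleftrightarrow>
    (\<exists>Gs Hs :: nat \<Rightarrow> 'a set.
       (\<forall>i. Gs (Suc i) \<subseteq> Gs i) \<and> (\<forall>i. Hs (Suc i) \<subseteq> Hs i) \<and>
       (\<forall>i. subgroup (Gs i) G) \<and>
       (\<Inter>i. Gs i) = H \<and>
       (\<forall>i. subgroup (Hs i) (G\<lparr>carrier := Gs i\<rparr>)) \<and>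
       (\<forall>i. Hs i \<lhd> G) \<and>
       (\<forall>i. sofic (G Mod Hs i)) \<and>
       (\<forall>i. amenable ((G\<lparr>carrier := Gs i\<rparr>) Mod Hs i)))"

definition sigma_co_sofic :: "('a, 'b) monoid_scheme \<Rightarrow> 'a set \<Rightarrow> bool" where
  "sigma_co_sofic G H \<longleftrightarrow>
    (\<exists>Gs Hs :: nat \<Rightarrow> 'a set.
       (\<forall>i. Gs i \<subseteq> Gs (Suc i)) \<and> (\<forall>i. Hs i \<subseteq> Hs (Suc i)) \<and>
       (\<forall>i. subgroup (Gs i) G) \<and>
       (\<Union>i. Gs i) = carrier G \<and> (\<Union>i. Hs i) = H \<and>
       (\<forall>i. subgroup (Hs i) (G\<lparr>carrier := Gs i\<rparr>)) \<and>
       (\<forall>i. co_sofic (G\<lparr>carrier := Gs i\<rparr>) (Hs i)))"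

definition ultra_null :: "nat filter \<Rightarrow> (nat \<Rightarrow> ('c, 'd) monoid_scheme) \<Rightarrow> (nat \<Rightarrow> 'c) set" where
  "ultra_null \<omega> L = {f \<in> carrier (product_group UNIV L). eventually (\<lambda>i. f i = \<one>\<^bsub>L i\<^esub>) \<omega>}"

definition ultraproduct :: "nat filter \<Rightarrow> (nat \<Rightarrow> ('c, 'd) monoid_scheme) \<Rightarrow> ((nat \<Rightarrow> 'c) set) monoid" where
  "ultraproduct \<omega> L = product_group UNIV L Mod ultra_null \<omega> L"

definition ultra_subset :: "nat filter \<Rightarrow> (nat \<Rightarrow> ('c, 'd) monoid_scheme) \<Rightarrow> (nat \<Rightarrow> 'c set) \<Rightarrow> (nat \<Rightarrow> 'c) set set" where
  "ultra_subset \<omega> L S = (\<lambda>f. ultra_null \<omega> L #>\<^bsub>product_group UNIV L\<^esub> f) ` (\<Pi>\<^sub>E i\<in>UNIV. S i)"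

text \<open>H < G is relatively sofic over K; the auxiliary groups G'_i are taken with
  elements of type 'e (given by the itself argument).\<close>
definition relatively_sofic_over ::
  "'e itself \<Rightarrow> ('a, 'b) monoid_scheme \<Rightarrow> 'a set \<Rightarrow> ('k, 'l) monoid_scheme \<Rightarrow> bool" where
  "relatively_sofic_over _ G H K \<longleftrightarrow>
    (\<exists>(G' :: nat \<Rightarrow> 'e monoid) (H' :: nat \<Rightarrow> 'e set) \<omega> \<pi>.
       (\<forall>i. sofic (G' i)) \<and>
       (\<forall>i. subgroup (H' i) (G' i)) \<and>
       (\<forall>i. amenable ((G' i)\<lparr>carrier := H' i\<rparr>)) \<and>
       free_ultrafilter \<omega> \<and>
       \<pi> \<in> hom G (ultraproduct \<omega> (\<lambda>i. G' i \<times>\<times> K)) \<and> inj_on \<pi> (carrier G) \<and>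
       \<pi> ` carrier G \<inter> ultra_subset \<omega> (\<lambda>i. G' i \<times>\<times> K) (\<lambda>i. H' i \<times> carrier K) = \<pi> ` H)"

end

theory Submission
  imports Defs "HOL-Library.Nat_Bijection"
begin

text \<open>
  Write \<open>G = \<Union>i. G\<^sub>i\<close> and \<open>H = \<Union>i. H\<^sub>i\<close> with \<open>H\<^sub>i\<close> co-sofic in \<open>G\<^sub>i\<close>, witnessed by
  subgroups \<open>G\<^sub>i\<^sub>j\<close> decreasing to \<open>H\<^sub>i\<close> and normal subgroups \<open>N\<^sub>i\<^sub>j \<lhd> G\<^sub>i\<close> with
  \<open>G\<^sub>i/N\<^sub>i\<^sub>j\<close> sofic and \<open>G\<^sub>i\<^sub>j/N\<^sub>i\<^sub>j\<close> amenable (\<open>Gs i\<close>, \<open>Hs i\<close>, \<open>GG i j\<close>, \<open>HH i j\<close> below).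
  Send \<open>g\<close> to the sequence of cosets \<open>N\<^sub>i\<^sub>j g\<close> in \<open>G\<^sub>i/N\<^sub>i\<^sub>j\<close> (trivial if \<open>g \<notin> G\<^sub>i\<close>),
  paired with \<open>g\<close> itself, and pass to the ultraproduct along a free ultrafilter on the pairs
  \<open>(i, j)\<close> under which \<open>i \<rightarrow> \<infinity>\<close> and \<open>j\<close> eventually dominates any prescribed function of
  \<open>i\<close>. As \<open>i \<rightarrow> \<infinity>\<close> the map is eventually multiplicative, and the second coordinate makes
  it injective. An element of \<open>H\<close> lies in \<open>H\<^sub>i \<subseteq> G\<^sub>i\<^sub>j\<close> for all large \<open>i\<close>, so its image
  lies in the product of the amenable subgroups \<open>G\<^sub>i\<^sub>j/N\<^sub>i\<^sub>j\<close>; an element outside \<open>H\<close>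
  leaves \<open>G\<^sub>i\<^sub>j\<close> once \<open>j\<close> is large relative to \<open>i\<close>, so its image does not.
\<close>

section \<open>Ultrafilters\<close>

lemma Inf_chain_neq_bot:
  fixes C :: "'a filter set"
  assumes "C \<noteq> {}" and "bot \<notin> C" and chain: "\<And>U V. U \<in> C \<Longrightarrow> V \<in> C \<Longrightarrow> U \<le> V \<or> V \<le> U"
  shows "Inf C \<noteq> bot"
proof -
  have "eventually P (Inf C) \<longleftrightarrow> (\<exists>U\<in>C. eventually P U)" for P
  proof (rule eventually_Inf_base[OF \<open>C \<noteq> {}\<close>])
    fix U V assume "U \<in> C" "V \<in> C"
    from chain[OF this] show "\<exists>W\<in>C. W \<le> inf U V"
      using \<open>U \<in> C\<close> \<open>V \<in> C\<close> by (metis inf.absorb_iff1 inf.absorb_iff2 order_refl)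
  qed
  then show ?thesis
    using \<open>bot \<notin> C\<close> by (metis eventually_False)
qed

lemma maximal_filter_ultra:
  assumes max: "\<And>U. U \<noteq> bot \<Longrightarrow> U \<le> M \<Longrightarrow> U = M"
  shows "eventually P M \<or> eventually (\<lambda>x. \<not> P x) M"
proof (cases "inf M (principal {x. \<not> P x}) = bot")
  case True
  then have "eventually (\<lambda>_. False) (inf M (principal {x. \<not> P x}))"
    by simp
  then show ?thesis
    unfolding eventually_inf_principal by simp
next
  case False
  then have "inf M (principal {x. \<not> P x}) = M"
    by (rule max) simp
  moreover have "eventually (\<lambda>x. \<not> P x) (inf M (principal {x. \<not> P x}))"
    by (simp add: eventually_inf_principal)
  ultimately show ?thesis
    by simp
qed

lemma exists_ultrafilter_le:
  fixes F :: "'a filter"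
  assumes "F \<noteq> bot"
  shows "\<exists>U\<le>F. U \<noteq> bot \<and> (\<forall>P. eventually P U \<or> eventually (\<lambda>x. \<not> P x) U)"
proof -
  define A where "A = {U. U \<noteq> bot \<and> U \<le> F}"
  have po: "partial_order_on A (relation_of (\<ge>) A)"
    by (rule partial_order_on_relation_ofI) auto
  have "\<exists>L\<in>A. \<forall>U\<in>C. L \<le> U" if "C \<in> Chains (relation_of (\<ge>) A)" for C
  proof (cases "C = {}")
    case True
    then show ?thesis using assms by (auto simp: A_def)
  next
    case False
    from that have CA: "C \<subseteq> A" and chain: "\<And>U V. U \<in> C \<Longrightarrow> V \<in> C \<Longrightarrow> U \<le> V \<or> V \<le> U"
      by (auto simp: Chains_def relation_of_def)
    have "Inf C \<noteq> bot"
      using Inf_chain_neq_bot[OF False _ chain] CA by (auto simp: A_def)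
    moreover obtain U where "U \<in> C"
      using False by blast
    then have "Inf C \<le> F"
      using CA by (auto simp: A_def intro: Inf_lower2)
    ultimately show ?thesis
      by (auto simp: A_def intro: Inf_lower)
  qed
  from predicate_Zorn[OF po this] obtain M where M: "M \<in> A" and max: "\<And>U. U \<in> A \<Longrightarrow> U \<le> M \<Longrightarrow> U = M"
    by auto
  have "U = M" if "U \<noteq> bot" "U \<le> M" for U
    using M that by (intro max) (auto simp: A_def)
  then have "eventually P M \<or> eventually (\<lambda>x. \<not> P x) M" for P
    by (rule maximal_filter_ultra)
  then show ?thesis
    using M unfolding A_def by blast
qed

lemma exists_free_ultrafilter_le:
  assumes "F \<noteq> bot" and "F \<le> cofinite"
  shows "\<exists>\<omega>. free_ultrafilter \<omega> \<and> \<omega> \<le> F"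
  using exists_ultrafilter_le[OF assms(1)] assms(2) unfolding free_ultrafilter_def
  by (meson order_trans)

lemma exists_free_ultrafilter_diagonal:
  "\<exists>\<omega>. free_ultrafilter \<omega> \<and>
     (\<forall>i\<^sub>0 (J :: nat \<Rightarrow> nat). \<forall>\<^sub>F n in \<omega>.
        i\<^sub>0 \<le> fst (prod_decode n) \<and> J (fst (prod_decode n)) \<le> snd (prod_decode n))"
proof -
  define S where "S p = {n. fst p \<le> fst (prod_decode n) \<and> snd p (fst (prod_decode n)) \<le> snd (prod_decode n)}"
    for p :: "nat \<times> (nat \<Rightarrow> nat)"
  define F where "F = (INF p. principal (S p))"
  have eventually_F: "eventually P F \<longleftrightarrow> (\<exists>p. \<forall>n\<in>S p. P n)" for P
    unfolding F_def
  proof (subst eventually_INF_base)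
    fix p q :: "nat \<times> (nat \<Rightarrow> nat)"
    have "S (max (fst p) (fst q), \<lambda>i. max (snd p i) (snd q i)) \<subseteq> S p \<inter> S q"
      unfolding S_def by auto
    then show "\<exists>r\<in>UNIV. principal (S r) \<le> inf (principal (S p)) (principal (S q))"
      by auto
  qed (auto simp: eventually_principal)
  have "F \<noteq> bot"
  proof
    assume "F = bot"
    then obtain p where "\<forall>n\<in>S p. False"
      using eventually_F[of "\<lambda>_. False"] by auto
    moreover have "prod_encode (fst p, snd p (fst p)) \<in> S p"
      unfolding S_def by simp
    ultimately show False
      by blast
  qed
  moreover have "F \<le> cofinite"
    unfolding cofinite_eq_sequentially le_filter_def eventually_sequentially
  proof (intro allI impI)
    fix P :: "nat \<Rightarrow> bool" assume "\<exists>N. \<forall>n\<ge>N. P n"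
    then obtain N where N: "\<And>n. N \<le> n \<Longrightarrow> P n"
      by blast
    have "N \<le> n" if "n \<in> S (N, \<lambda>_. 0)" for n
      using that le_prod_encode_1[of "fst (prod_decode n)" "snd (prod_decode n)"]
      unfolding S_def by simp
    then show "eventually P F"
      using N eventually_F by blast
  qed
  ultimately obtain \<omega> where "free_ultrafilter \<omega>" and "\<omega> \<le> F"
    using exists_free_ultrafilter_le by blast
  moreover have "eventually (\<lambda>n. n \<in> S (i\<^sub>0, J)) F" for i\<^sub>0 J
    using eventually_F by blast
  ultimately show ?thesis
    unfolding S_def le_filter_def by auto
qed

section \<open>Cosets and quotients\<close>

lemma (in group) rcos_eq_iff_mult_inv_mem:
  assumes "subgroup N G" and "x \<in> carrier G" and "y \<in> carrier G"
  shows "N #> x = N #> y \<longleftrightarrow> x \<otimes> inv y \<in> N"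
proof -
  have "N #> x = N #> y \<longleftrightarrow> x \<in> N #> y"
    using assms repr_independence repr_independenceD by metis
  also have "\<dots> \<longleftrightarrow> x \<otimes> inv y \<in> N"
    using subgroup.rcos_module[OF assms(1) is_group assms(3,2)] .
  finally show ?thesis .
qed

lemma FactGroup_carrier_update:
  "((G\<lparr>carrier := A\<rparr>) Mod N)\<lparr>carrier := carrier ((G\<lparr>carrier := B\<rparr>) Mod N)\<rparr> = (G\<lparr>carrier := B\<rparr>) Mod N"
  by (simp add: FactGroup_def fun_eq_iff)

lemma rcos_mem_carrier_FactGroup_iff:
  assumes "group G" and "subgroup N G" and "subgroup K G" and "N \<subseteq> K" and g: "g \<in> carrier G"
  shows "N #>\<^bsub>G\<^esub> g \<in> carrier ((G\<lparr>carrier := K\<rparr>) Mod N) \<longleftrightarrow> g \<in> K"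
proof
  assume "N #>\<^bsub>G\<^esub> g \<in> carrier ((G\<lparr>carrier := K\<rparr>) Mod N)"
  then obtain k where k: "k \<in> K" and "N #>\<^bsub>G\<^esub> g = N #>\<^bsub>G\<^esub> k"
    by (auto simp: FactGroup_def RCOSETS_def)
  moreover have "g \<in> N #>\<^bsub>G\<^esub> g"
    using group.rcos_self[OF assms(1) g assms(2)] .
  ultimately obtain n where "n \<in> N" and "g = n \<otimes>\<^bsub>G\<^esub> k"
    unfolding r_coset_def by auto
  then show "g \<in> K"
    using k \<open>N \<subseteq> K\<close> subgroup.m_closed[OF assms(3)] by blast
qed (auto simp: FactGroup_def RCOSETS_def)

section \<open>Algebraic ultraproducts\<close>

lemma ultra_null_normal:
  assumes L: "\<And>i. group (L i)"
  shows "ultra_null \<omega> L \<lhd> product_group UNIV L"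
proof -
  interpret P: group "product_group UNIV L"
    using L by simp
  have "subgroup (ultra_null \<omega> L) (product_group UNIV L)"
  proof (rule P.subgroupI)
    show "ultra_null \<omega> L \<subseteq> carrier (product_group UNIV L)"
      by (auto simp: ultra_null_def)
    have "\<one>\<^bsub>product_group UNIV L\<^esub> \<in> ultra_null \<omega> L"
      using P.one_closed by (simp add: ultra_null_def)
    then show "ultra_null \<omega> L \<noteq> {}"
      by blast
  next
    fix f assume "f \<in> ultra_null \<omega> L"
    then show "inv\<^bsub>product_group UNIV L\<^esub> f \<in> ultra_null \<omega> L"
      unfolding ultra_null_def
      by (auto simp: L PiE_iff group.is_monoid group.inv_closed monoid.inv_one elim: eventually_mono)
  next
    fix f g assume "f \<in> ultra_null \<omega> L" and "g \<in> ultra_null \<omega> L"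
    then show "f \<otimes>\<^bsub>product_group UNIV L\<^esub> g \<in> ultra_null \<omega> L"
      unfolding ultra_null_def
      by (auto simp: L PiE_iff group.is_monoid monoid.m_closed elim: eventually_elim2)
  qed
  moreover have "x \<otimes>\<^bsub>product_group UNIV L\<^esub> f \<otimes>\<^bsub>product_group UNIV L\<^esub> inv\<^bsub>product_group UNIV L\<^esub> x \<in> ultra_null \<omega> L"
    if "x \<in> carrier (product_group UNIV L)" and "f \<in> ultra_null \<omega> L" for x f
    using that unfolding ultra_null_def
    by (auto simp: L PiE_iff group.is_monoid group.inv_closed monoid.m_closed group.r_inv
        elim!: eventually_mono)
  ultimately show ?thesis
    by (simp add: P.normal_inv_iff)
qed

lemma ultra_null_rcos_eq_iff:
  assumes L: "\<And>i. group (L i)"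
    and f: "f \<in> carrier (product_group UNIV L)" and g: "g \<in> carrier (product_group UNIV L)"
  shows "ultra_null \<omega> L #>\<^bsub>product_group UNIV L\<^esub> f = ultra_null \<omega> L #>\<^bsub>product_group UNIV L\<^esub> g
    \<longleftrightarrow> (\<forall>\<^sub>F i in \<omega>. f i = g i)"
proof -
  interpret P: group "product_group UNIV L"
    using L by simp
  have "f i \<otimes>\<^bsub>L i\<^esub> inv\<^bsub>L i\<^esub> g i = \<one>\<^bsub>L i\<^esub> \<longleftrightarrow> f i = g i" for i
    using f g group.inv_solve_right[OF L[of i], of "\<one>\<^bsub>L i\<^esub>" "f i" "g i"]
    by (auto simp: L group.is_monoid PiE_iff)
  moreover have "f \<otimes>\<^bsub>product_group UNIV L\<^esub> inv\<^bsub>product_group UNIV L\<^esub> g \<in> carrier (product_group UNIV L)"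
    using f g by (intro P.m_closed P.inv_closed)
  ultimately show ?thesis
    using f g P.rcos_eq_iff_mult_inv_mem[OF normal_imp_subgroup[OF ultra_null_normal[OF L]] f g]
    by (simp add: ultra_null_def L)
qed

lemma rcos_mem_ultra_subset_iff:
  assumes L: "\<And>i. group (L i)" and S: "\<And>i. S i \<subseteq> carrier (L i)" "\<And>i. S i \<noteq> {}"
    and f: "f \<in> carrier (product_group UNIV L)"
  shows "ultra_null \<omega> L #>\<^bsub>product_group UNIV L\<^esub> f \<in> ultra_subset \<omega> L S \<longleftrightarrow> (\<forall>\<^sub>F i in \<omega>. f i \<in> S i)"
proof
  assume "ultra_null \<omega> L #>\<^bsub>product_group UNIV L\<^esub> f \<in> ultra_subset \<omega> L S"
  then obtain s where s: "s \<in> (\<Pi>\<^sub>E i\<in>UNIV. S i)"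
    and "ultra_null \<omega> L #>\<^bsub>product_group UNIV L\<^esub> s = ultra_null \<omega> L #>\<^bsub>product_group UNIV L\<^esub> f"
    unfolding ultra_subset_def by auto
  moreover have "s \<in> carrier (product_group UNIV L)"
    using s S(1) by auto
  ultimately have "\<forall>\<^sub>F i in \<omega>. s i = f i"
    using ultra_null_rcos_eq_iff[OF L _ f] by blast
  then show "\<forall>\<^sub>F i in \<omega>. f i \<in> S i"
    by (rule eventually_mono) (metis s PiE_mem UNIV_I)
next
  assume ev: "\<forall>\<^sub>F i in \<omega>. f i \<in> S i"
  define s where "s i = (if f i \<in> S i then f i else (SOME x. x \<in> S i))" for i
  have "s i \<in> S i" for i
    using S(2)[of i] by (simp add: s_def some_in_eq)
  then have s: "s \<in> (\<Pi>\<^sub>E i\<in>UNIV. S i)"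
    by (simp add: PiE_UNIV_domain)
  moreover have "s \<in> carrier (product_group UNIV L)"
    using s S(1) by auto
  moreover have "\<forall>\<^sub>F i in \<omega>. s i = f i"
    using ev by (auto simp: s_def elim: eventually_mono)
  ultimately have "ultra_null \<omega> L #>\<^bsub>product_group UNIV L\<^esub> s = ultra_null \<omega> L #>\<^bsub>product_group UNIV L\<^esub> f"
    using ultra_null_rcos_eq_iff[OF L _ f] by blast
  then show "ultra_null \<omega> L #>\<^bsub>product_group UNIV L\<^esub> f \<in> ultra_subset \<omega> L S"
    unfolding ultra_subset_def by (rule image_eqI[OF sym s])
qed

lemma rcos_ultra_null_hom:
  fixes G :: "('a, 'b) monoid_scheme"
  assumes G: "group G" and L: "\<And>i. group (L i)"
    and F_closed: "\<And>g. g \<in> carrier G \<Longrightarrow> F g \<in> carrier (product_group UNIV L)"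
    and F_mult: "\<And>g h. g \<in> carrier G \<Longrightarrow> h \<in> carrier G \<Longrightarrow>
      \<forall>\<^sub>F i in \<omega>. F (g \<otimes>\<^bsub>G\<^esub> h) i = F g i \<otimes>\<^bsub>L i\<^esub> F h i"
  shows "(\<lambda>g. ultra_null \<omega> L #>\<^bsub>product_group UNIV L\<^esub> F g) \<in> hom G (ultraproduct \<omega> L)"
proof -
  interpret G: group G
    by (rule G)
  let ?P = "product_group UNIV L" and ?N = "ultra_null \<omega> L"
  interpret P: group ?P
    using L by simp
  have N: "?N \<lhd> ?P"
    using ultra_null_normal[OF L] .
  have "?N #>\<^bsub>?P\<^esub> F g \<in> carrier (ultraproduct \<omega> L)" if "g \<in> carrier G" for g
    unfolding ultraproduct_def FactGroup_def
    using P.rcosetsI[OF normal_imp_subgroup[OF N, THEN subgroup.subset] F_closed[OF that]] by simp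
  moreover have "?N #>\<^bsub>?P\<^esub> F (g \<otimes>\<^bsub>G\<^esub> h) = (?N #>\<^bsub>?P\<^esub> F g) \<otimes>\<^bsub>ultraproduct \<omega> L\<^esub> (?N #>\<^bsub>?P\<^esub> F h)"
    if g: "g \<in> carrier G" and h: "h \<in> carrier G" for g h
  proof -
    have "(?N #>\<^bsub>?P\<^esub> F g) \<otimes>\<^bsub>ultraproduct \<omega> L\<^esub> (?N #>\<^bsub>?P\<^esub> F h) = ?N #>\<^bsub>?P\<^esub> (F g \<otimes>\<^bsub>?P\<^esub> F h)"
      unfolding ultraproduct_def using normal.rcos_sum[OF N F_closed[OF g] F_closed[OF h]] by simp
    also have "\<dots> = ?N #>\<^bsub>?P\<^esub> F (g \<otimes>\<^bsub>G\<^esub> h)"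
    proof (rule ultra_null_rcos_eq_iff[OF L, THEN iffD2])
      show "F g \<otimes>\<^bsub>?P\<^esub> F h \<in> carrier ?P"
        using P.m_closed[OF F_closed[OF g] F_closed[OF h]] .
      show "F (g \<otimes>\<^bsub>G\<^esub> h) \<in> carrier ?P"
        using F_closed[OF G.m_closed[OF g h]] .
      show "\<forall>\<^sub>F i in \<omega>. (F g \<otimes>\<^bsub>?P\<^esub> F h) i = F (g \<otimes>\<^bsub>G\<^esub> h) i"
        using F_mult[OF g h] by (rule eventually_mono) simp
    qed
    finally show ?thesis
      by simp
  qed
  ultimately show ?thesis
    by (intro homI)
qed

lemma relatively_sofic_over_selfI:
  fixes G :: "('a, 'b) monoid_scheme" and G' :: "nat \<Rightarrow> 'e monoid" and \<phi> :: "nat \<Rightarrow> 'a \<Rightarrow> 'e"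
  assumes G: "group G" and H: "H \<subseteq> carrier G"
    and sofic: "\<And>n. sofic (G' n)" and subgroup: "\<And>n. subgroup (H' n) (G' n)"
    and amenable: "\<And>n. amenable ((G' n)\<lparr>carrier := H' n\<rparr>)"
    and \<omega>: "free_ultrafilter \<omega>"
    and \<phi>_closed: "\<And>n g. g \<in> carrier G \<Longrightarrow> \<phi> n g \<in> carrier (G' n)"
    and \<phi>_mult: "\<And>g h. g \<in> carrier G \<Longrightarrow> h \<in> carrier G \<Longrightarrow>
      \<forall>\<^sub>F n in \<omega>. \<phi> n (g \<otimes>\<^bsub>G\<^esub> h) = \<phi> n g \<otimes>\<^bsub>G' n\<^esub> \<phi> n h"
    and \<phi>_mem: "\<And>g. g \<in> carrier G \<Longrightarrow> (\<forall>\<^sub>F n in \<omega>. \<phi> n g \<in> H' n) \<longleftrightarrow> g \<in> H"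
  shows "relatively_sofic_over TYPE('e) G H G"
proof -
  define L where "L n = G' n \<times>\<times> G" for n
  have L_group: "group (L n)" for n
    using sofic[of n] G unfolding L_def sofic_def by (simp add: DirProd_group)
  define F where "F g = (\<lambda>n. (\<phi> n g, g))" for g
  define \<pi> where "\<pi> g = ultra_null \<omega> L #>\<^bsub>product_group UNIV L\<^esub> F g" for g
  have F_closed: "F g \<in> carrier (product_group UNIV L)" if "g \<in> carrier G" for g
    using that \<phi>_closed unfolding F_def L_def by auto
  have "\<pi> \<in> hom G (ultraproduct \<omega> L)"
    unfolding \<pi>_def using G L_group F_closed
  proof (rule rcos_ultra_null_hom)
    show "\<forall>\<^sub>F n in \<omega>. F (g \<otimes>\<^bsub>G\<^esub> h) n = F g n \<otimes>\<^bsub>L n\<^esub> F h n" if "g \<in> carrier G" "h \<in> carrier G" for g h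
      using \<phi>_mult[OF that] by (rule eventually_mono) (simp add: F_def L_def)
  qed
  moreover have "inj_on \<pi> (carrier G)"
  proof (rule inj_onI)
    fix g h assume "g \<in> carrier G" "h \<in> carrier G" "\<pi> g = \<pi> h"
    then have "\<forall>\<^sub>F n in \<omega>. g = h"
      unfolding \<pi>_def using ultra_null_rcos_eq_iff[OF L_group] F_closed
      by (auto simp: F_def elim: eventually_mono)
    then show "g = h"
      using \<omega> by (simp add: free_ultrafilter_def eventually_const)
  qed
  moreover have "\<pi> g \<in> ultra_subset \<omega> L (\<lambda>n. H' n \<times> carrier G) \<longleftrightarrow> g \<in> H" if g: "g \<in> carrier G" for g
  proof -
    have "H' n \<times> carrier G \<subseteq> carrier (L n)" for n
      using subgroup.subset[OF subgroup] by (auto simp: L_def)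
    moreover have "H' n \<times> carrier G \<noteq> {}" for n
      using subgroup.one_closed[OF subgroup] g by blast
    ultimately have "\<pi> g \<in> ultra_subset \<omega> L (\<lambda>n. H' n \<times> carrier G) \<longleftrightarrow> (\<forall>\<^sub>F n in \<omega>. F g n \<in> H' n \<times> carrier G)"
      unfolding \<pi>_def using rcos_mem_ultra_subset_iff[OF L_group] F_closed[OF g] by simp
    with g \<phi>_mem show ?thesis
      by (simp add: F_def)
  qed
  then have "\<pi> ` carrier G \<inter> ultra_subset \<omega> L (\<lambda>n. H' n \<times> carrier G) = \<pi> ` H"
    using H by blast
  ultimately show ?thesis
    unfolding relatively_sofic_over_def L_def using sofic subgroup amenable \<omega> by blast
qed

section \<open>Families witnessing \<open>\<sigma>\<close>-co-soficity\<close>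

locale sigma_co_sofic_family =
  fixes G :: "('a, 'b) monoid_scheme" and H :: "'a set"
    and Gs Hs :: "nat \<Rightarrow> 'a set" and GG HH :: "nat \<Rightarrow> nat \<Rightarrow> 'a set"
  assumes group: "group G"
    and Gs_mono: "\<And>i. Gs i \<subseteq> Gs (Suc i)" and Hs_mono: "\<And>i. Hs i \<subseteq> Hs (Suc i)"
    and subgroup_Gs: "\<And>i. subgroup (Gs i) G"
    and Union_Gs: "(\<Union>i. Gs i) = carrier G" and Union_Hs: "(\<Union>i. Hs i) = H"
    and GG_antimono: "\<And>i j. GG i (Suc j) \<subseteq> GG i j"
    and Inter_GG: "\<And>i. (\<Inter>j. GG i j) = Hs i"
    and subgroup_GG: "\<And>i j. subgroup (GG i j) (G\<lparr>carrier := Gs i\<rparr>)"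
    and subgroup_HH: "\<And>i j. subgroup (HH i j) (G\<lparr>carrier := GG i j\<rparr>)"
    and normal_HH: "\<And>i j. HH i j \<lhd> G\<lparr>carrier := Gs i\<rparr>"
    and sofic_quotient: "\<And>i j. sofic (G\<lparr>carrier := Gs i\<rparr> Mod HH i j)"
    and amenable_quotient: "\<And>i j. amenable (G\<lparr>carrier := GG i j\<rparr> Mod HH i j)"
begin

lemma group_Gs: "group (G\<lparr>carrier := Gs i\<rparr>)"
  using subgroup.subgroup_is_group[OF subgroup_Gs group] .

lemma Gs_mono_le: "i \<le> k \<Longrightarrow> Gs i \<subseteq> Gs k"
  by (rule lift_Suc_mono_le[of Gs, OF Gs_mono])

lemma Hs_mono_le: "i \<le> k \<Longrightarrow> Hs i \<subseteq> Hs k"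
  by (rule lift_Suc_mono_le[of Hs, OF Hs_mono])

lemma GG_antimono_le: "j \<le> k \<Longrightarrow> GG i k \<subseteq> GG i j"
  by (rule lift_Suc_antimono_le[of "GG i", OF GG_antimono])

lemma Hs_subset_GG: "Hs i \<subseteq> GG i j"
  using Inter_GG[of i] by blast

lemma GG_subset_Gs: "GG i j \<subseteq> Gs i"
  using subgroup.subset[OF subgroup_GG] by simp

lemma HH_subset_GG: "HH i j \<subseteq> GG i j"
  using subgroup.subset[OF subgroup_HH] by simp

lemma H_subset_carrier: "H \<subseteq> carrier G"
  unfolding Union_Hs[symmetric]
  using Hs_subset_GG[of _ 0] GG_subset_Gs subgroup.subset[OF subgroup_Gs] by blast

lemma subgroup_carrier_quotient:
  "subgroup (carrier (G\<lparr>carrier := GG i j\<rparr> Mod HH i j)) (G\<lparr>carrier := Gs i\<rparr> Mod HH i j)"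
proof (rule group.group_incl_imp_subgroup)
  show "group (G\<lparr>carrier := Gs i\<rparr> Mod HH i j)"
    using sofic_quotient unfolding sofic_def by blast
  show "carrier (G\<lparr>carrier := GG i j\<rparr> Mod HH i j) \<subseteq> carrier (G\<lparr>carrier := Gs i\<rparr> Mod HH i j)"
    using GG_subset_Gs unfolding FactGroup_def RCOSETS_def by auto
  show "group ((G\<lparr>carrier := Gs i\<rparr> Mod HH i j)\<lparr>carrier := carrier (G\<lparr>carrier := GG i j\<rparr> Mod HH i j)\<rparr>)"
    using amenable_quotient unfolding FactGroup_carrier_update amenable_def by blast
qed

definition approx_coset :: "nat \<Rightarrow> nat \<Rightarrow> 'a \<Rightarrow> 'a set" where
  "approx_coset i j g = HH i j #>\<^bsub>G\<^esub> (if g \<in> Gs i then g else \<one>\<^bsub>G\<^esub>)"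

lemma approx_coset_closed: "approx_coset i j g \<in> carrier (G\<lparr>carrier := Gs i\<rparr> Mod HH i j)"
proof -
  have "(if g \<in> Gs i then g else \<one>\<^bsub>G\<^esub>) \<in> Gs i"
    using subgroup.one_closed[OF subgroup_Gs] by simp
  then show ?thesis
    unfolding approx_coset_def FactGroup_def RCOSETS_def by auto
qed

lemma approx_coset_mult:
  assumes "g \<in> Gs i" and "h \<in> Gs i"
  shows "approx_coset i j (g \<otimes>\<^bsub>G\<^esub> h) = approx_coset i j g \<otimes>\<^bsub>G\<lparr>carrier := Gs i\<rparr> Mod HH i j\<^esub> approx_coset i j h"
proof -
  have "(HH i j #>\<^bsub>G\<^esub> g) <#>\<^bsub>G\<^esub> (HH i j #>\<^bsub>G\<^esub> h) = HH i j #>\<^bsub>G\<^esub> (g \<otimes>\<^bsub>G\<^esub> h)"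
    using normal.rcos_sum[OF normal_HH[of i j], of g h] assms by simp
  moreover have "g \<otimes>\<^bsub>G\<^esub> h \<in> Gs i"
    using subgroup.m_closed[OF subgroup_Gs assms] .
  ultimately show ?thesis
    using assms by (simp add: approx_coset_def)
qed

lemma approx_coset_mem_iff:
  assumes "g \<in> Gs i"
  shows "approx_coset i j g \<in> carrier (G\<lparr>carrier := GG i j\<rparr> Mod HH i j) \<longleftrightarrow> g \<in> GG i j"
  using rcos_mem_carrier_FactGroup_iff[OF group_Gs normal_imp_subgroup[OF normal_HH] subgroup_GG
      HH_subset_GG, of g] assms
  by (simp add: approx_coset_def)

lemma eventually_mem_Gs:
  assumes "\<And>i\<^sub>0. \<forall>\<^sub>F n in \<omega>. i\<^sub>0 \<le> a n" and "g \<in> carrier G"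
  shows "\<forall>\<^sub>F n in \<omega>. g \<in> Gs (a n)"
proof -
  obtain i\<^sub>0 where "g \<in> Gs i\<^sub>0"
    using assms(2) Union_Gs by blast
  then have "g \<in> Gs k" if "i\<^sub>0 \<le> k" for k
    using Gs_mono_le[OF that] by blast
  then show ?thesis
    using assms(1)[of i\<^sub>0] by (auto elim: eventually_mono)
qed

lemma eventually_mem_Hs:
  assumes "\<And>i\<^sub>0. \<forall>\<^sub>F n in \<omega>. i\<^sub>0 \<le> a n" and "g \<in> H"
  shows "\<forall>\<^sub>F n in \<omega>. g \<in> Hs (a n)"
proof -
  obtain i\<^sub>0 where "g \<in> Hs i\<^sub>0"
    using assms(2) Union_Hs by blast
  then have "g \<in> Hs k" if "i\<^sub>0 \<le> k" for k
    using Hs_mono_le[OF that] by blast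
  then show ?thesis
    using assms(1)[of i\<^sub>0] by (auto elim: eventually_mono)
qed

lemma eventually_approx_coset_mult:
  assumes "\<And>i\<^sub>0. \<forall>\<^sub>F n in \<omega>. i\<^sub>0 \<le> a n" and "g \<in> carrier G" and "h \<in> carrier G"
  shows "\<forall>\<^sub>F n in \<omega>. approx_coset (a n) (b n) (g \<otimes>\<^bsub>G\<^esub> h)
    = approx_coset (a n) (b n) g \<otimes>\<^bsub>G\<lparr>carrier := Gs (a n)\<rparr> Mod HH (a n) (b n)\<^esub> approx_coset (a n) (b n) h"
  using eventually_mem_Gs[OF assms(1,2)] eventually_mem_Gs[OF assms(1,3)]
  by (rule eventually_elim2) (rule approx_coset_mult)

lemma eventually_approx_coset_mem_iff:
  assumes diagonal: "\<And>i\<^sub>0 J. \<forall>\<^sub>F n in \<omega>. i\<^sub>0 \<le> a n \<and> J (a n) \<le> b n"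
    and "\<omega> \<noteq> bot" and g: "g \<in> carrier G"
  shows "(\<forall>\<^sub>F n in \<omega>. approx_coset (a n) (b n) g \<in> carrier (G\<lparr>carrier := GG (a n) (b n)\<rparr> Mod HH (a n) (b n)))
    \<longleftrightarrow> g \<in> H"
proof -
  have a_large: "\<forall>\<^sub>F n in \<omega>. i\<^sub>0 \<le> a n" for i\<^sub>0
    using diagonal[of i\<^sub>0 "\<lambda>_. 0"] by (rule eventually_mono) simp
  have "\<forall>\<^sub>F n in \<omega>. approx_coset (a n) (b n) g \<in> carrier (G\<lparr>carrier := GG (a n) (b n)\<rparr> Mod HH (a n) (b n))"
    if "g \<in> H"
    using eventually_mem_Hs[OF a_large that]
    by (rule eventually_mono) (use Hs_subset_GG GG_subset_Gs approx_coset_mem_iff in blast)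
  moreover have "g \<in> H"
    if ev: "\<forall>\<^sub>F n in \<omega>. approx_coset (a n) (b n) g \<in> carrier (G\<lparr>carrier := GG (a n) (b n)\<rparr> Mod HH (a n) (b n))"
  proof (rule ccontr)
    assume "g \<notin> H"
    then have "\<exists>j. g \<notin> GG i j" for i
      using Inter_GG[of i] Union_Hs by blast
    then obtain J where J: "\<And>i. g \<notin> GG i (J i)"
      by metis
    have "\<forall>\<^sub>F n in \<omega>. g \<notin> GG (a n) (b n)"
      using diagonal[of 0 J] by (rule eventually_mono) (use J GG_antimono_le in blast)
    with ev eventually_mem_Gs[OF a_large g] have "\<forall>\<^sub>F n in \<omega>. False"
      by eventually_elim (simp add: approx_coset_mem_iff)
    with \<open>\<omega> \<noteq> bot\<close> show False
      by simp
  qed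
  ultimately show ?thesis
    by blast
qed

theorem relatively_sofic_over_self: "relatively_sofic_over TYPE('a set) G H G"
proof -
  obtain \<omega> where \<omega>: "free_ultrafilter \<omega>" and diagonal:
    "\<And>i\<^sub>0 J. \<forall>\<^sub>F n in \<omega>. i\<^sub>0 \<le> fst (prod_decode n) \<and> J (fst (prod_decode n)) \<le> snd (prod_decode n)"
    using exists_free_ultrafilter_diagonal by blast
  define a where "a n = fst (prod_decode n)" for n
  define b where "b n = snd (prod_decode n)" for n
  have a_large: "\<forall>\<^sub>F n in \<omega>. i\<^sub>0 \<le> a n" for i\<^sub>0
    using diagonal[of i\<^sub>0 "\<lambda>_. 0"] unfolding a_def by (rule eventually_mono) simp
  show ?thesis
  proof (rule relatively_sofic_over_selfI[where \<omega> = \<omega> and \<phi> = "\<lambda>n. approx_coset (a n) (b n)"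
        and G' = "\<lambda>n. G\<lparr>carrier := Gs (a n)\<rparr> Mod HH (a n) (b n)"
        and H' = "\<lambda>n. carrier (G\<lparr>carrier := GG (a n) (b n)\<rparr> Mod HH (a n) (b n))"])
    show "amenable ((G\<lparr>carrier := Gs (a n)\<rparr> Mod HH (a n) (b n))
        \<lparr>carrier := carrier (G\<lparr>carrier := GG (a n) (b n)\<rparr> Mod HH (a n) (b n))\<rparr>)" for n
      unfolding FactGroup_carrier_update by (rule amenable_quotient)
    show "\<forall>\<^sub>F n in \<omega>. approx_coset (a n) (b n) (g \<otimes>\<^bsub>G\<^esub> h)
        = approx_coset (a n) (b n) g \<otimes>\<^bsub>G\<lparr>carrier := Gs (a n)\<rparr> Mod HH (a n) (b n)\<^esub> approx_coset (a n) (b n) h"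
      if "g \<in> carrier G" and "h \<in> carrier G" for g h
      using eventually_approx_coset_mult[OF a_large that] .
    show "(\<forall>\<^sub>F n in \<omega>. approx_coset (a n) (b n) g \<in> carrier (G\<lparr>carrier := GG (a n) (b n)\<rparr> Mod HH (a n) (b n)))
        \<longleftrightarrow> g \<in> H" if "g \<in> carrier G" for g
      using eventually_approx_coset_mem_iff[OF diagonal[unfolded a_def[symmetric] b_def[symmetric]] _ that] \<omega>
      by (simp add: free_ultrafilter_def)
  qed (use group H_subset_carrier sofic_quotient subgroup_carrier_quotient \<omega> approx_coset_closed in auto)
qed

end

lemma sigma_co_sofic_familyE:
  assumes "group G" and "sigma_co_sofic G H"
  obtains Gs Hs GG HH where "sigma_co_sofic_family G H Gs Hs GG HH"
proof -
  obtain Gs Hs where Gs: "\<forall>i. Gs i \<subseteq> Gs (Suc i)" "\<forall>i. subgroup (Gs i) G" "(\<Union>i. Gs i) = carrier G"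
    and Hs: "\<forall>i. Hs i \<subseteq> Hs (Suc i)" "(\<Union>i. Hs i) = H"
    and co_sofic: "\<forall>i. co_sofic (G\<lparr>carrier := Gs i\<rparr>) (Hs i)"
    using assms(2) unfolding sigma_co_sofic_def by blast
  have "\<forall>i. \<exists>GG HH. (\<forall>j. GG (Suc j) \<subseteq> GG j) \<and> (\<forall>j. HH (Suc j) \<subseteq> HH j) \<and>
      (\<forall>j. subgroup (GG j) (G\<lparr>carrier := Gs i\<rparr>)) \<and> (\<Inter>j. GG j) = Hs i \<and>
      (\<forall>j. subgroup (HH j) (G\<lparr>carrier := GG j\<rparr>)) \<and> (\<forall>j. HH j \<lhd> G\<lparr>carrier := Gs i\<rparr>) \<and>
      (\<forall>j. sofic (G\<lparr>carrier := Gs i\<rparr> Mod HH j)) \<and> (\<forall>j. amenable (G\<lparr>carrier := GG j\<rparr> Mod HH j))"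
    using co_sofic unfolding co_sofic_def by simp
  then obtain GG HH where "\<forall>i. (\<forall>j. GG i (Suc j) \<subseteq> GG i j) \<and> (\<forall>j. HH i (Suc j) \<subseteq> HH i j) \<and>
      (\<forall>j. subgroup (GG i j) (G\<lparr>carrier := Gs i\<rparr>)) \<and> (\<Inter>j. GG i j) = Hs i \<and>
      (\<forall>j. subgroup (HH i j) (G\<lparr>carrier := GG i j\<rparr>)) \<and> (\<forall>j. HH i j \<lhd> G\<lparr>carrier := Gs i\<rparr>) \<and>
      (\<forall>j. sofic (G\<lparr>carrier := Gs i\<rparr> Mod HH i j)) \<and> (\<forall>j. amenable (G\<lparr>carrier := GG i j\<rparr> Mod HH i j))"
    by metis
  then have "sigma_co_sofic_family G H Gs Hs GG HH"
    by (intro sigma_co_sofic_family.intro) (use assms(1) Gs Hs in simp_all)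
  then show thesis
    by (rule that)
qed

theorem corollary2p19:
  fixes G :: "('a, 'b) monoid_scheme" and H :: "'a set"
  assumes "group G" and "subgroup H G" and "sigma_co_sofic G H"
  shows "relatively_sofic_over TYPE('a set) G H G"
proof -
  obtain Gs Hs GG HH where "sigma_co_sofic_family G H Gs Hs GG HH"
    using sigma_co_sofic_familyE[OF assms(1,3)] .
  then show ?thesis
    by (rule sigma_co_sofic_family.relatively_sofic_over_self)
qed

end
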